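(* Let $\mathbb F$ be a finite field with $q$ elements and let $A$ be an $m$-dimensional $\mathbb F$-algebra which can be generated by $r\ge1$ elements as an $\mathbb F$-algebra. For $k\ge r$ let $\mathrm{ng}_k$ be the number of $k$-tuples in $A^k$ which do not generate $A$ as an $\mathbb F$-algebra. Then $\mathrm{ng}_k\le m^{2k/r}q^{mk-k/r}$ for every $k>r$.
   Context: Algebras are associative and unital; elements generate $A$ if the non-commutative monomials in them (including $1$) span $A$. *)

theory Defs
  imports Complex_Main
begin

definition is_F_algebra :: "('a::field \<Rightarrow> 'b::ring_1 \<Rightarrow> 'b) \<Rightarrow> bool" where
  "is_F_algebra smul \<longleftrightarrow> vector_space smul \<and>
     (\<forall>c x y. smul c (x * y) = smul c x * y \<and> smul c (x * y) = x * smul c y)"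

definition F_dim_eq :: "('a::field \<Rightarrow> 'b::ring_1 \<Rightarrow> 'b) \<Rightarrow> nat \<Rightarrow> bool" where
  "F_dim_eq smul m \<longleftrightarrow> (\<exists>B. finite B \<and> \<not> module.dependent smul B \<and>
      module.span smul B = UNIV \<and> card B = m)"

text \<open>A list of elements generates the algebra if the non-commutative monomials in them
  (products of finite words over the elements, including the empty word giving 1) span it.\<close>
definition alg_generates :: "('a::field \<Rightarrow> 'b::ring_1 \<Rightarrow> 'b) \<Rightarrow> 'b list \<Rightarrow> bool" where
  "alg_generates smul xs \<longleftrightarrow>
     module.span smul {prod_list (map (\<lambda>i. xs ! i) w) | w. set w \<subseteq> {..<length xs}} = UNIV"

definition ng :: "('a::field \<Rightarrow> 'b::ring_1 \<Rightarrow> 'b) \<Rightarrow> nat \<Rightarrow> nat" where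
  "ng smul k = card {xs :: 'b list. length xs = k \<and> \<not> alg_generates smul xs}"

end

theory Submission
  imports Defs "HOL-Library.FuncSet" "HOL-Analysis.Convex" "Jordan_Normal_Form.Determinant"
begin

(* 1. Shearer's inequality (proved from a generalised Hoelder inequality, itself from AM-GM):
      if every coordinate lies in exactly t of the sets F j, then |Z|^t <= prod_j |Z restricted
      to F j|.  Applied to the non-generating n-tuples and the n projections forgetting one
      coordinate (a sub-tuple of a non-generating tuple is non-generating) it gives
      ng n ^ (n - 1) <= ng (n - 1) ^ n, and by induction ng k ^ r <= ng r ^ k for k >= r.
   2. Fix a generating r-tuple g.  For every r-tuple x, the affine line t |-> x + t (g - x)
      has at most (m - 1) m non-generating points: choose a basis of monomials of length
      < m in g; their coordinates along the line form a polynomial matrix whose determinant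
      has degree <= (m - 1) m and does not vanish at t = 1.  For each t <> 1 the map
      x |-> (1 - t) x + t g is a bijection, so double counting gives
      ng r (q - 1) <= q^(mr) (m - 1) m, hence ng r * q <= m^2 q^(mr).
   3. Combining ng k <= ng r ^ (k / r) with the bound of step 2 is real arithmetic. *)

text \<open>Generalised Hoelder inequality for \<open>t\<close> non-negative functions with exponents \<open>1/t\<close>,
  reduced to the AM-GM inequality after normalising each function to total mass \<open>1\<close>.\<close>
lemma holder_prod_roots:
  fixes a :: "'j \<Rightarrow> 'v \<Rightarrow> real"
  assumes "finite V" "finite J" "card J = t" "t > 0" "\<forall>j\<in>J. \<forall>v\<in>V. a j v \<ge> 0"
  shows "(\<Sum>v\<in>V. \<Prod>j\<in>J. a j v powr (1/t)) \<le> (\<Prod>j\<in>J. (\<Sum>v\<in>V. a j v) powr (1/t))"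
proof (cases "\<exists>j\<in>J. (\<Sum>v\<in>V. a j v) = 0")
  case True
  then obtain j0 where j0: "j0 \<in> J" "\<forall>v\<in>V. a j0 v = 0"
    using assms sum_nonneg_eq_0_iff by metis
  then have "(\<Prod>j\<in>J. a j v powr (1/t)) = 0" if "v \<in> V" for v
    using that assms(2) by (metis powr_0 prod_zero_iff)
  then show ?thesis by (simp add: prod_nonneg)
next
  case False
  define S where "S j = (\<Sum>v\<in>V. a j v)" for j
  define P where "P = (\<Prod>j\<in>J. S j powr (1/t))"
  have S_pos: "S j > 0" if "j \<in> J" for j
    using False assms that unfolding S_def by (metis less_eq_real_def sum_nonneg)
  have J_ne: "J \<noteq> {}" using assms by auto
  have pointwise: "(\<Prod>j\<in>J. a j v powr (1/t)) \<le> (\<Sum>j\<in>J. a j v / S j / t) * P"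
    if v: "v \<in> V" for v
  proof -
    have "(\<Prod>j\<in>J. a j v powr (1/t)) = (\<Prod>j\<in>J. (a j v / S j) powr (1/t) * S j powr (1/t))"
      using S_pos assms v by (intro prod.cong refl) (simp add: powr_divide less_imp_neq[symmetric])
    also have "\<dots> = (\<Prod>j\<in>J. a j v / S j) powr (1/t) * P"
      using assms S_pos v unfolding P_def by (simp add: prod.distrib prod_powr_distrib)
    also have "(\<Prod>j\<in>J. a j v / S j) powr (1/t) \<le> (\<Sum>j\<in>J. a j v / S j / t)"
    proof -
      have "a j v / S j \<ge> 0" if "j \<in> J" for j
        using assms S_pos[OF that] v that by simp
      then show ?thesis
        using arith_geom_mean[OF assms(2) J_ne, of "\<lambda>j. a j v / S j"] assms(3) by simp
    qed
    finally show ?thesis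
      unfolding P_def by (simp add: mult_right_mono prod_nonneg)
  qed
  have "(\<Sum>v\<in>V. \<Prod>j\<in>J. a j v powr (1/t)) \<le> (\<Sum>v\<in>V. (\<Sum>j\<in>J. a j v / S j / t) * P)"
    by (rule sum_mono) (use pointwise in auto)
  also have "\<dots> = (\<Sum>j\<in>J. (\<Sum>v\<in>V. a j v) / S j / t) * P"
    by (simp add: sum_distrib_right[symmetric] sum_divide_distrib sum.swap[of _ V J])
  also have "(\<Sum>j\<in>J. (\<Sum>v\<in>V. a j v) / S j / t) = (\<Sum>j\<in>J. 1 / real t)"
    unfolding S_def[symmetric] by (intro sum.cong refl) (force dest: S_pos)
  also have "\<dots> = 1"
    using assms by simp
  finally show ?thesis unfolding P_def S_def by simp
qed

definition proj :: "'i set \<Rightarrow> ('i \<Rightarrow> 'x) set \<Rightarrow> ('i \<Rightarrow> 'x) set" where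
  "proj S Z = (\<lambda>f. restrict f S) ` Z"

definition forget :: "'i \<Rightarrow> ('i \<Rightarrow> 'x) \<Rightarrow> ('i \<Rightarrow> 'x)" where
  "forget n f = f(n := undefined)"

lemma inj_on_forget_fibre: "inj_on (forget n) {f\<in>Z. f n = v}"
proof (rule inj_onI)
  fix f g assume f: "f \<in> {f\<in>Z. f n = v}" and g: "g \<in> {f\<in>Z. f n = v}"
    and "forget n f = forget n g"
  then have "(forget n f)(n := v) = (forget n g)(n := v)" by simp
  then show "f = g" using f g by (simp add: forget_def) (metis fun_upd_triv)
qed

lemma card_proj_forget_outside:
  assumes "n \<notin> S" "Y \<subseteq> Z" "finite Z"
  shows "card (proj S (forget n ` Y)) \<le> card (proj S Z)"
proof -
  have restrict_forget: "restrict (forget n f) S = restrict f S" for f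
    using assms(1) by (auto simp: forget_def restrict_def)
  have "proj S (forget n ` Y) = proj S Y" unfolding proj_def image_image restrict_forget ..
  also have "\<dots> \<subseteq> proj S Z" using assms(2) unfolding proj_def by auto
  finally show ?thesis using assms(3) by (simp add: card_mono proj_def)
qed

lemma card_proj_forget_inside:
  assumes "n \<in> S" and "\<forall>f\<in>Y. f n = v"
  shows "card (proj S (forget n ` Y)) = card (proj S Y)"
proof -
  have "proj S (forget n ` Y) = forget n ` proj S Y"
    using assms(1) unfolding proj_def image_image
    by (intro image_cong refl) (auto simp: forget_def restrict_def fun_eq_iff)
  moreover have "inj_on (forget n) (proj S Y)"
    using assms unfolding inj_on_def proj_def
    by (auto simp: forget_def fun_eq_iff restrict_def split: if_splits) metis
  ultimately show ?thesis by (simp add: card_image)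
qed

lemma card_proj_fibres:
  assumes "finite Z" and "n \<in> S"
  shows "card (proj S Z) = (\<Sum>v\<in>(\<lambda>f. f n) ` Z. card (proj S {f\<in>Z. f n = v}))"
proof -
  have "proj S Z = (\<Union>v\<in>(\<lambda>f. f n) ` Z. proj S {f\<in>Z. f n = v})"
    unfolding proj_def by auto
  also have "card \<dots> = (\<Sum>v\<in>(\<lambda>f. f n) ` Z. card (proj S {f\<in>Z. f n = v}))"
  proof (rule card_UN_disjoint)
    show "\<forall>v\<in>(\<lambda>f. f n) ` Z. \<forall>w\<in>(\<lambda>f. f n) ` Z. v \<noteq> w \<longrightarrow>
        proj S {f\<in>Z. f n = v} \<inter> proj S {f\<in>Z. f n = w} = {}"
      using assms(2) unfolding proj_def by (auto dest: fun_cong[where x = n])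
  qed (use assms(1) in \<open>auto simp: proj_def\<close>)
  finally show ?thesis .
qed

text \<open>Shearer's inequality, proved by induction on the coordinate set, splitting \<open>Z\<close> into
  fibres over the value of a new coordinate and recombining by Hoelder.\<close>
lemma shearer_powr:
  fixes F :: "'j \<Rightarrow> 'i set" and Z :: "('i \<Rightarrow> 'x) set"
  assumes "finite I" "finite J" "t > 0" "\<forall>i\<in>I. card {j\<in>J. i \<in> F j} = t"
    "Z \<subseteq> extensional I" "finite Z"
  shows "real (card Z) \<le> (\<Prod>j\<in>J. real (card (proj (F j) Z)) powr (1/t))"
  using assms(1,4,5,6)
proof (induction I arbitrary: Z rule: finite_induct)
  case empty
  then have "Z \<subseteq> {\<lambda>_. undefined}" by (auto simp: extensional_def)
  then consider "Z = {}" | "Z = {\<lambda>_. undefined}" by blast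
  then show ?case
  proof cases
    case 2
    then have "card (proj (F j) Z) = 1" for j by (simp add: proj_def)
    then show ?thesis using 2 by simp
  qed (simp add: prod_nonneg)
next
  case (insert n I)
  define V where "V = (\<lambda>f. f n) ` Z"
  define Zv where "Zv v = {f\<in>Z. f n = v}" for v
  define J0 where "J0 = {j\<in>J. n \<notin> F j}"
  define J1 where "J1 = {j\<in>J. n \<in> F j}"
  define P where "P j = real (card (proj (F j) Z))" for j
  define a where "a j v = real (card (proj (F j) (Zv v)))" for j v
  have finite_V: "finite V" using insert.prems unfolding V_def by simp
  have finite_J: "finite J0" "finite J1" unfolding J0_def J1_def using assms(2) by auto
  have J_split: "J = J0 \<union> J1" "J0 \<inter> J1 = {}" unfolding J0_def J1_def by auto
  have card_J1: "card J1 = t" using insert.prems(1) unfolding J1_def by simp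
  \<comment> \<open>Each fibre, with coordinate \<open>n\<close> forgotten, is a set of functions on \<open>I\<close>.\<close>
  have fibre: "real (card (Zv v)) \<le> (\<Prod>j\<in>J. real (card (proj (F j) (forget n ` Zv v))) powr (1/t))"
    for v
  proof -
    have "card (Zv v) = card (forget n ` Zv v)"
      unfolding Zv_def by (simp add: card_image[OF inj_on_forget_fibre])
    moreover have "forget n ` Zv v \<subseteq> extensional I"
      using insert.prems(2) unfolding Zv_def forget_def extensional_def by auto
    ultimately show ?thesis
      using insert.IH insert.prems unfolding Zv_def by auto
  qed
  have outside: "real (card (proj (F j) (forget n ` Zv v))) \<le> P j" if "j \<in> J0" for j v
    using card_proj_forget_outside[of n "F j" "Zv v" Z] that insert.prems(3)
    unfolding J0_def P_def Zv_def by auto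
  have inside: "real (card (proj (F j) (forget n ` Zv v))) = a j v" if "j \<in> J1" for j v
    using that card_proj_forget_inside[of n "F j" "Zv v" v] unfolding J1_def a_def Zv_def by auto
  have inside_sum: "(\<Sum>v\<in>V. a j v) = P j" if "j \<in> J1" for j
    using card_proj_fibres[OF insert.prems(3), of n "F j"] that
    unfolding a_def P_def V_def Zv_def J1_def by simp
  have "real (card Z) = (\<Sum>v\<in>V. real (card (Zv v)))"
    using card_proj_fibres[OF insert.prems(3), of n UNIV] unfolding V_def Zv_def proj_def restrict_UNIV by simp
  also have "\<dots> \<le> (\<Sum>v\<in>V. (\<Prod>j\<in>J0. P j powr (1/t)) * (\<Prod>j\<in>J1. a j v powr (1/t)))"
  proof (rule sum_mono)
    fix v
    have "(\<Prod>j\<in>J. real (card (proj (F j) (forget n ` Zv v))) powr (1/t)) =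
      (\<Prod>j\<in>J0. real (card (proj (F j) (forget n ` Zv v))) powr (1/t)) *
      (\<Prod>j\<in>J1. a j v powr (1/t))"
      unfolding J_split(1) using finite_J J_split inside
      by (simp add: prod.union_disjoint)
    also have "\<dots> \<le> (\<Prod>j\<in>J0. P j powr (1/t)) * (\<Prod>j\<in>J1. a j v powr (1/t))"
      using outside by (intro mult_right_mono prod_mono) (auto intro: powr_mono2 prod_nonneg)
    finally show "real (card (Zv v)) \<le> \<dots>" using fibre[of v] by linarith
  qed
  also have "\<dots> = (\<Prod>j\<in>J0. P j powr (1/t)) * (\<Sum>v\<in>V. \<Prod>j\<in>J1. a j v powr (1/t))"
    by (simp add: sum_distrib_left)
  also have "\<dots> \<le> (\<Prod>j\<in>J0. P j powr (1/t)) * (\<Prod>j\<in>J1. (\<Sum>v\<in>V. a j v) powr (1/t))"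
    using finite_V finite_J card_J1 assms(3)
    by (intro mult_left_mono holder_prod_roots) (auto simp: a_def prod_nonneg)
  also have "\<dots> = (\<Prod>j\<in>J. P j powr (1/t))"
    unfolding J_split(1) using finite_J J_split inside_sum by (simp add: prod.union_disjoint)
  finally show ?case unfolding P_def .
qed

lemma shearer:
  fixes F :: "'j \<Rightarrow> 'i set" and Z :: "('i \<Rightarrow> 'x) set"
  assumes "finite I" "finite J" "t > 0" "\<forall>i\<in>I. card {j\<in>J. i \<in> F j} = t"
    "Z \<subseteq> extensional I" "finite Z"
  shows "card Z ^ t \<le> (\<Prod>j\<in>J. card (proj (F j) Z))"
proof -
  have root_pow: "(x powr (1/t)) ^ t = x" if "x \<ge> 0" for x :: real
    using that assms(3) by (simp add: powr_realpow'[symmetric] powr_powr)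
  have "real (card Z) ^ t \<le> (\<Prod>j\<in>J. real (card (proj (F j) Z)) powr (1/t)) ^ t"
    by (rule power_mono[OF shearer_powr[OF assms]]) simp
  also have "\<dots> = (\<Prod>j\<in>J. real (card (proj (F j) Z)))"
    by (simp add: prod_power_distrib root_pow)
  finally show ?thesis by (simp flip: of_nat_power of_nat_prod)
qed

definition monomial :: "'b::ring_1 list \<Rightarrow> nat list \<Rightarrow> 'b" where
  "monomial xs w = prod_list (map (\<lambda>i. xs ! i) w)"

lemma monomial_Nil [simp]: "monomial xs [] = 1"
  by (simp add: monomial_def)

lemma monomial_Cons [simp]: "monomial xs (i # w) = xs ! i * monomial xs w"
  by (simp add: monomial_def)

definition monomials :: "'b::ring_1 list \<Rightarrow> 'b set" where
  "monomials xs = prod_list ` lists (set xs)"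

lemma monomials_eq: "monomials xs = monomial xs ` {w. set w \<subseteq> {..<length xs}}"
proof -
  have "set xs = (\<lambda>i. xs ! i) ` {..<length xs}" by (auto simp: set_conv_nth)
  then have "lists (set xs) = map (\<lambda>i. xs ! i) ` lists {..<length xs}"
    by (simp add: lists_image)
  then show ?thesis unfolding monomials_def monomial_def lists_eq_set by (simp add: image_image)
qed

lemma alg_generates_monomials:
  "alg_generates smul xs \<longleftrightarrow> module.span smul (monomials xs) = UNIV"
  unfolding alg_generates_def monomials_eq monomial_def by (simp add: setcompr_eq_image)

lemma alg_generates_mono:
  assumes "is_F_algebra smul" "set ys \<subseteq> set xs" "alg_generates smul ys"
  shows "alg_generates smul xs"
proof -
  interpret vector_space smul using assms(1) unfolding is_F_algebra_def by auto
  have "monomials ys \<subseteq> monomials xs" using assms(2) unfolding monomials_def by auto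
  then show ?thesis using assms(3) span_mono unfolding alg_generates_monomials by blast
qed

definition NG :: "('a::field \<Rightarrow> 'b::ring_1 \<Rightarrow> 'b) \<Rightarrow> nat \<Rightarrow> 'b list set" where
  "NG smul k = {xs. length xs = k \<and> \<not> alg_generates smul xs}"

lemma ng_eq_card_NG: "ng smul k = card (NG smul k)"
  unfolding ng_def NG_def ..

lemma finite_NG: "finite (UNIV :: 'b set) \<Longrightarrow> finite (NG (smul :: 'a::field \<Rightarrow> 'b::ring_1 \<Rightarrow> 'b) k)"
  unfolding NG_def by (rule finite_subset[OF _ finite_lists_length_eq[of UNIV k]]) auto

lemma ng_le_card_tuples:
  assumes "finite (UNIV :: 'b set)"
  shows "ng (smul :: 'a::field \<Rightarrow> 'b::ring_1 \<Rightarrow> 'b) k \<le> card (UNIV :: 'b set) ^ k"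
  using card_mono[OF finite_lists_length_eq[OF assms], of "NG smul k" k]
    card_lists_length_eq[OF assms, of k]
  by (auto simp: ng_eq_card_NG NG_def)

definition as_fun :: "'b list \<Rightarrow> nat \<Rightarrow> 'b" where
  "as_fun xs = restrict (\<lambda>i. xs ! i) {0..<length xs}"

lemma inj_on_as_fun: "inj_on as_fun {xs. length xs = n}"
proof (rule inj_onI)
  fix xs ys :: "'b list"
  assume len: "xs \<in> {xs. length xs = n}" "ys \<in> {xs. length xs = n}"
    and eq: "as_fun xs = as_fun ys"
  show "xs = ys"
  proof (rule nth_equalityI)
    show "length xs = length ys" using len by simp
    show "xs ! i = ys ! i" if "i < length xs" for i
      using fun_cong[OF eq, of i] len that by (simp add: as_fun_def)
  qed
qed

lemma card_proj_NG:
  fixes smul :: "'a::field \<Rightarrow> 'b::ring_1 \<Rightarrow> 'b"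
  assumes "is_F_algebra smul" "finite (UNIV :: 'b set)" "j < n"
  shows "card (proj ({0..<n} - {j}) (as_fun ` NG smul n)) \<le> ng smul (n - 1)"
proof -
  define S where "S = {0..<n} - {j}"
  define L where "L = filter (\<lambda>i. i \<noteq> j) [0..<n]"
  have set_L: "set L = S" unfolding L_def S_def by auto
  have length_L: "length L = n - 1"
  proof -
    have "distinct L" unfolding L_def by simp
    then have "length L = card (set L)" by (rule distinct_card[symmetric])
    then show ?thesis using set_L assms(3) unfolding S_def by simp
  qed
  have inj: "inj_on (\<lambda>h. map h L) (proj S (as_fun ` NG smul n))"
  proof (rule inj_onI)
    fix h h' assume "h \<in> proj S (as_fun ` NG smul n)" "h' \<in> proj S (as_fun ` NG smul n)"
      and "map h L = map h' L"
    then show "h = h'"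
      unfolding proj_def set_L[symmetric] by (auto simp: fun_eq_iff restrict_def map_eq_conv)
  qed
  have "(\<lambda>h. map h L) ` proj S (as_fun ` NG smul n) \<subseteq> NG smul (n - 1)"
  proof
    fix ys assume "ys \<in> (\<lambda>h. map h L) ` proj S (as_fun ` NG smul n)"
    then obtain xs where xs: "xs \<in> NG smul n" "ys = map (restrict (as_fun xs) S) L"
      unfolding proj_def by auto
    have "length xs = n" using xs(1) unfolding NG_def by simp
    then have ys: "ys = map (\<lambda>i. xs ! i) L"
      using xs(2) unfolding L_def S_def as_fun_def by simp
    have "set ys \<subseteq> set xs" using ys \<open>length xs = n\<close> unfolding L_def by auto
    then have "\<not> alg_generates smul ys"
      using xs(1) alg_generates_mono[OF assms(1)] unfolding NG_def by blast
    then show "ys \<in> NG smul (n - 1)" using ys length_L unfolding NG_def by simp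
  qed
  then have "card ((\<lambda>h. map h L) ` proj S (as_fun ` NG smul n)) \<le> ng smul (n - 1)"
    unfolding ng_eq_card_NG by (intro card_mono finite_NG assms(2))
  then show ?thesis unfolding S_def[symmetric] by (simp add: card_image[OF inj])
qed

text \<open>Shearer's inequality for the \<open>n\<close> projections forgetting one coordinate.\<close>
lemma ng_step:
  fixes smul :: "'a::field \<Rightarrow> 'b::ring_1 \<Rightarrow> 'b"
  assumes "is_F_algebra smul" "finite (UNIV :: 'b set)" "n \<ge> 2"
  shows "ng smul n ^ (n - 1) \<le> ng smul (n - 1) ^ n"
proof -
  define F where "F j = {0..<n} - {j}" for j
  have card_Z: "card (as_fun ` NG smul n) = ng smul n"
    unfolding ng_eq_card_NG
    by (rule card_image, rule inj_on_subset[OF inj_on_as_fun[of n]]) (auto simp: NG_def)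
  have cover: "\<forall>i\<in>{0..<n}. card {j\<in>{0..<n}. i \<in> F j} = n - 1"
  proof
    fix i assume "i \<in> {0..<n}"
    then have "{j\<in>{0..<n}. i \<in> F j} = {0..<n} - {i}" unfolding F_def by auto
    then show "card {j\<in>{0..<n}. i \<in> F j} = n - 1" using \<open>i \<in> {0..<n}\<close> by simp
  qed
  have "card (as_fun ` NG smul n) ^ (n - 1) \<le> (\<Prod>j\<in>{0..<n}. card (proj (F j) (as_fun ` NG smul n)))"
    using assms(3) cover finite_NG[OF assms(2)]
    by (intro shearer[of "{0..<n}"]) (auto simp: as_fun_def NG_def)
  also have "\<dots> \<le> (\<Prod>j\<in>{0..<n}. ng smul (n - 1))"
    by (rule prod_mono) (use card_proj_NG[OF assms(1,2)] in \<open>auto simp: F_def\<close>)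
  finally show ?thesis using card_Z by simp
qed

lemma ng_chain:
  fixes smul :: "'a::field \<Rightarrow> 'b::ring_1 \<Rightarrow> 'b"
  assumes "is_F_algebra smul" "finite (UNIV :: 'b set)" "r \<ge> 1" "k \<ge> r"
  shows "ng smul k ^ r \<le> ng smul r ^ k"
  using assms(4)
proof (induction k rule: dec_induct)
  case (step n)
  have "ng smul (Suc n) ^ n \<le> ng smul n ^ Suc n"
    using ng_step[OF assms(1,2), of "Suc n"] step.hyps assms(3) by simp
  then have "(ng smul (Suc n) ^ n) ^ r \<le> (ng smul n ^ Suc n) ^ r"
    by (rule power_mono) simp
  then have "(ng smul (Suc n) ^ r) ^ n \<le> (ng smul n ^ r) ^ Suc n"
    by (simp only: power_mult[symmetric] mult.commute)
  also have "\<dots> \<le> (ng smul r ^ Suc n) ^ n"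
    using power_mono[OF step.IH, of "Suc n"] by (simp only: power_mult[symmetric] mult.commute)
  finally have "(ng smul (Suc n) ^ r) ^ n \<le> (ng smul r ^ Suc n) ^ n" .
  moreover obtain n' where "n = Suc n'" using step.hyps assms(3) by (cases n) auto
  ultimately show ?case
    using power_le_imp_le_base[of "ng smul (Suc n) ^ r" n' "ng smul r ^ Suc n"] by simp
qed simp

lemma card_filter_sum: "finite A \<Longrightarrow> card {x\<in>A. P x} = (\<Sum>x\<in>A. if P x then 1 else 0)"
  by (simp add: sum.If_cases Int_def)

definition words :: "nat \<Rightarrow> nat \<Rightarrow> nat list set" where
  "words r l = {w. set w \<subseteq> {..<r} \<and> length w \<le> l}"

lemma words_mono: "l \<le> l' \<Longrightarrow> words r l \<subseteq> words r l'"
  unfolding words_def by auto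

lemma finite_words: "finite (words r l)"
  unfolding words_def by (rule finite_lists_length_le) simp

context vector_space
begin

lemma inj_independent_if_trivial_relation:
  fixes u :: "nat \<Rightarrow> 'b" and n :: nat
  assumes trivial: "\<And>c. (\<Sum>i<n. scale (c i) (u i)) = 0 \<Longrightarrow> \<forall>i<n. c i = 0"
  shows "inj_on u {..<n}" "independent (u ` {..<n})"
proof -
  show inj: "inj_on u {..<n}"
  proof (rule inj_onI, rule ccontr)
    fix i j assume ij: "i \<in> {..<n}" "j \<in> {..<n}" "u i = u j" "i \<noteq> j"
    define c where "c k = (if k = i then 1 else 0) - (if k = j then 1 else (0::'a))" for k
    have "scale (c k) (u k) = (if k = i then u k else 0) - (if k = j then u k else 0)" for k
      unfolding c_def by (simp add: scale_left_diff_distrib)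
    then have "(\<Sum>k<n. scale (c k) (u k)) =
        (\<Sum>k<n. if k = i then u k else 0) - (\<Sum>k<n. if k = j then u k else 0)"
      by (simp add: sum_subtractf)
    also have "\<dots> = 0" using ij by simp
    finally have "\<forall>k<n. c k = 0" by (rule trivial)
    then show False using ij unfolding c_def by auto
  qed
  show "independent (u ` {..<n})"
  proof (rule ccontr)
    assume "\<not> independent (u ` {..<n})"
    then obtain d v where d: "v \<in> u ` {..<n}" "d v \<noteq> 0" "(\<Sum>v\<in>u ` {..<n}. scale (d v) v) = 0"
      using dependent_finite[of "u ` {..<n}"] by auto
    have "(\<Sum>i<n. scale (d (u i)) (u i)) = 0" using d(3) by (simp add: sum.reindex[OF inj])
    then show False using trivial[of "\<lambda>i. d (u i)"] d(1,2) by auto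
  qed
qed

lemma trivial_relation_if_inj_independent:
  fixes u :: "nat \<Rightarrow> 'b" and n :: nat
  assumes inj: "inj_on u {..<n}" and indep: "independent (u ` {..<n})"
    and relation: "(\<Sum>i<n. scale (c i) (u i)) = 0"
  shows "\<forall>i<n. c i = 0"
proof -
  define d where "d v = c (the_inv_into {..<n} u v)" for v
  have "(\<Sum>v\<in>u ` {..<n}. scale (d v) v) = (\<Sum>i<n. scale (c i) (u i))"
    using inj by (simp add: sum.reindex d_def the_inv_into_f_f)
  then have "\<forall>v\<in>u ` {..<n}. d v = 0"
    using relation indep dependent_finite[of "u ` {..<n}"] by auto
  then show ?thesis using inj by (auto simp: d_def the_inv_into_f_f)
qed

lemma trivial_relation_iff:
  fixes u :: "nat \<Rightarrow> 'b" and n :: nat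
  shows "(\<forall>c. (\<Sum>i<n. scale (c i) (u i)) = 0 \<longrightarrow> (\<forall>i<n. c i = 0)) \<longleftrightarrow>
     inj_on u {..<n} \<and> independent (u ` {..<n})"
  using inj_independent_if_trivial_relation[where u = u and n = n]
    trivial_relation_if_inj_independent[where u = u and n = n]
  by blast

end

locale finite_algebra =
  fixes smul :: "'a::{finite,field} \<Rightarrow> 'b::ring_1 \<Rightarrow> 'b" and B :: "'b set"
  assumes algebra: "is_F_algebra smul" and finite_B: "finite B"
    and independent_B: "\<not> module.dependent smul B" and span_B: "module.span smul B = UNIV"
begin

sublocale finite_dimensional_vector_space smul B
proof -
  have "vector_space smul" using algebra unfolding is_F_algebra_def by blast
  then show "finite_dimensional_vector_space smul B"
    using finite_B independent_B span_B
    by (simp add: finite_dimensional_vector_space_def finite_dimensional_vector_space_axioms_def)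
qed

lemma scale_mult_left: "smul c (x * y) = smul c x * y"
  using algebra unfolding is_F_algebra_def by blast

lemma mult_scale_right: "x * smul c y = smul c (x * y)"
  using algebra unfolding is_F_algebra_def by metis

text \<open>Coordinates with respect to \<open>B\<close> identify the algebra with \<open>F^m\<close>.\<close>
lemma finite_card_UNIV_algebra:
  "finite (UNIV :: 'b set)" "card (UNIV :: 'b set) = card (UNIV :: 'a set) ^ card B"
proof -
  let ?comb = "\<lambda>f. \<Sum>b\<in>B. smul (f b) b"
  have inj: "inj_on ?comb (B \<rightarrow>\<^sub>E UNIV)"
  proof (rule inj_onI)
    fix f g assume fg: "f \<in> B \<rightarrow>\<^sub>E UNIV" "g \<in> B \<rightarrow>\<^sub>E UNIV" "?comb f = ?comb g"
    then have combination_zero: "(\<Sum>b\<in>B. smul (f b - g b) b) = 0"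
      by (simp add: scale_left_diff_distrib sum_subtractf)
    have "\<And>c. (\<Sum>b\<in>B. smul (c b) b) = 0 \<Longrightarrow> \<forall>b\<in>B. c b = 0"
      using independent_explicit[of B] independent_B by blast
    from this[OF combination_zero] have "\<forall>b\<in>B. f b - g b = 0" .
    then show "f = g" using fg(1,2) by (intro PiE_ext[OF fg(1,2)]) auto
  qed
  have "v \<in> ?comb ` (B \<rightarrow>\<^sub>E UNIV)" for v
  proof (rule image_eqI)
    show "v = ?comb (restrict (representation B v) B)"
      using sum_representation_eq[of B v B] independent_B finite_B span_B by simp
  qed (auto simp: PiE_def extensional_def)
  then have bij: "bij_betw ?comb (B \<rightarrow>\<^sub>E UNIV) UNIV"
    using inj by (auto simp: bij_betw_def)
  show "finite (UNIV :: 'b set)"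
    using bij_betw_finite[OF bij] finite_B by (simp add: finite_PiE)
  show "card (UNIV :: 'b set) = card (UNIV :: 'a set) ^ card B"
    using bij_betw_same_card[OF bij] finite_B by (simp add: card_PiE)
qed

text \<open>The algebra is non-zero (\<open>1 \<noteq> 0\<close>), so \<open>m \<ge> 1\<close>.\<close>
lemma card_B_pos: "card B \<ge> 1"
proof -
  have "B \<noteq> {}"
  proof
    assume "B = {}"
    then have "(1::'b) \<in> span {}" using span_B by simp
    then show False by simp
  qed
  then show ?thesis using finite_B by (simp add: Suc_leI card_gt_0_iff)
qed

text \<open>Left multiplication is linear, so it maps spans into spans.\<close>
lemma span_mult_left:
  assumes "u \<in> span S"
  shows "c * u \<in> span ((\<lambda>s. c * s) ` S)"
proof -
  obtain T a where T: "finite T" "T \<subseteq> S" "u = (\<Sum>v\<in>T. smul (a v) v)"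
    using assms unfolding span_explicit by blast
  have "c * u = (\<Sum>v\<in>T. smul (a v) (c * v))"
    unfolding T(3) by (simp add: sum_distrib_left mult_scale_right)
  also have "\<dots> \<in> span ((\<lambda>s. c * s) ` S)"
    using T by (intro span_sum span_scale span_base) auto
  finally show ?thesis .
qed

text \<open>If monomials of length \<open>\<le> l + 1\<close> in a generating tuple span nothing new, those of
  length \<open>\<le> l\<close> are closed under left multiplication by generators, hence span everything.\<close>
lemma span_monomials_stable:
  assumes "length g = r" "alg_generates smul g"
    and stable: "span (monomial g ` words r (Suc l)) \<subseteq> span (monomial g ` words r l)"
  shows "span (monomial g ` words r l) = UNIV"
proof -
  let ?U = "span (monomial g ` words r l)"
  have "monomial g w \<in> ?U" if "set w \<subseteq> {..<r}" for w
    using that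
  proof (induction w)
    case Nil
    have "[] \<in> words r l" unfolding words_def by simp
    then show ?case by (metis image_eqI span_base monomial_Nil)
  next
    case (Cons i w)
    have "g ! i * monomial g w \<in> span ((\<lambda>s. g ! i * s) ` (monomial g ` words r l))"
      using span_mult_left Cons by auto
    also have "\<dots> \<subseteq> span (monomial g ` words r (Suc l))"
    proof (rule span_mono, clarify)
      fix w' assume "w' \<in> words r l"
      then have "i # w' \<in> words r (Suc l)" using Cons.prems unfolding words_def by auto
      then show "g ! i * monomial g w' \<in> monomial g ` words r (Suc l)" by (metis image_eqI monomial_Cons)
    qed
    finally show ?case using stable by auto
  qed
  then have "monomials g \<subseteq> ?U" using assms(1) unfolding monomials_eq by auto
  then have "span (monomials g) \<subseteq> ?U" by (simp add: span_minimal)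
  then show ?thesis using assms(2) unfolding alg_generates_monomials by auto
qed

text \<open>Until they span everything, the spans of monomials of length \<open>\<le> l\<close> grow strictly
  in dimension; so monomials of length \<open>< m\<close> already span the algebra.\<close>
lemma span_short_monomials:
  assumes "length g = r" "alg_generates smul g"
  shows "span (monomial g ` words r (card B - 1)) = UNIV"
proof -
  have dim_bound: "min (Suc l) (card B) \<le> dim (monomial g ` words r l)" for l
  proof (induction l)
    case 0
    have "words r 0 = {[]}" unfolding words_def by auto
    then show ?case by simp
  next
    case (Suc l)
    have mono: "span (monomial g ` words r l) \<subseteq> span (monomial g ` words r (Suc l))"
      by (intro span_mono image_mono words_mono) simp
    show ?case
    proof (cases "span (monomial g ` words r (Suc l)) \<subseteq> span (monomial g ` words r l)")
      case True
      then have "span (monomial g ` words r (Suc l)) = UNIV"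
        using span_monomials_stable[OF assms] mono by auto
      then have "dim (monomial g ` words r (Suc l)) = card B"
        using dim_span[of "monomial g ` words r (Suc l)"] dim_UNIV by simp
      then show ?thesis by simp
    next
      case False
      then have "dim (monomial g ` words r l) < dim (monomial g ` words r (Suc l))"
        using mono by (intro dim_psubset) auto
      then show ?thesis using Suc.IH by (simp add: min_def split: if_splits)
    qed
  qed
  have "card B \<le> dim (monomial g ` words r (card B - 1))"
    using dim_bound[of "card B - 1"] card_B_pos by simp
  moreover have "dim (monomial g ` words r (card B - 1)) \<le> card B"
    using dim_subset_UNIV unfolding dimension_def .
  ultimately show ?thesis
    using dim_eq_full unfolding dimension_def by (metis le_antisym)
qed

lemma short_monomial_basis:
  assumes "length g = r" "alg_generates smul g"
  obtains w where "\<forall>i<card B. w i \<in> words r (card B - 1)"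
    and "inj_on (\<lambda>i. monomial g (w i)) {..<card B}"
    and "independent ((\<lambda>i. monomial g (w i)) ` {..<card B})"
proof -
  let ?S = "monomial g ` words r (card B - 1)"
  obtain C where C: "C \<subseteq> ?S" "independent C" "?S \<subseteq> span C" "card C = dim ?S"
    using basis_exists[of ?S] by blast
  have "card C = card B"
    using C(4) dim_eq_full span_short_monomials[OF assms] unfolding dimension_def by simp
  moreover have "finite C" using finite_subset[OF C(1) finite_imageI[OF finite_words]] .
  ultimately obtain h where h: "bij_betw h {0..<card B} C"
    using ex_bij_betw_nat_finite by fastforce
  define w where "w i = (SOME w. w \<in> words r (card B - 1) \<and> monomial g w = h i)" for i
  have w: "w i \<in> words r (card B - 1) \<and> monomial g (w i) = h i" if "i < card B" for i
  proof -
    have "h i \<in> ?S" using h that C(1) by (auto simp: bij_betw_def)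
    then have "\<exists>w. w \<in> words r (card B - 1) \<and> monomial g w = h i" by auto
    then show ?thesis unfolding w_def by (rule someI_ex)
  qed
  have "(\<lambda>i. monomial g (w i)) ` {..<card B} = h ` {0..<card B}"
    using w by (auto simp: image_def)
  moreover have "inj_on (\<lambda>i. monomial g (w i)) {..<card B}"
    using h w by (auto simp: bij_betw_def inj_on_def)
  ultimately show ?thesis
    using that[of w] w C(2) h by (simp add: bij_betw_def)
qed

end

definition affine_line :: "('a::field \<Rightarrow> 'b::ring_1 \<Rightarrow> 'b) \<Rightarrow> 'b list \<Rightarrow> 'b list \<Rightarrow> 'a \<Rightarrow> 'b list" where
  "affine_line smul x h t = map (\<lambda>i. x ! i + smul t (h ! i)) [0..<length x]"

lemma length_affine_line [simp]: "length (affine_line smul x h t) = length x"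
  by (simp add: affine_line_def)

lemma nth_affine_line [simp]:
  "i < length x \<Longrightarrow> affine_line smul x h t ! i = x ! i + smul t (h ! i)"
  by (simp add: affine_line_def)

text \<open>Coefficient of \<open>t ^ e\<close> in a monomial evaluated along an affine line.\<close>
fun line_coeff :: "'b::ring_1 list \<Rightarrow> 'b list \<Rightarrow> nat list \<Rightarrow> nat \<Rightarrow> 'b" where
  "line_coeff x h [] e = (if e = 0 then 1 else 0)"
| "line_coeff x h (i # w) e =
     x ! i * line_coeff x h w e + (case e of 0 \<Rightarrow> 0 | Suc e' \<Rightarrow> h ! i * line_coeff x h w e')"

lemma line_coeff_eq_0: "length w < e \<Longrightarrow> line_coeff x h w e = 0"
  by (induction w arbitrary: e) (auto split: nat.splits)

context finite_algebra
begin

lemma monomial_affine_line: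
  assumes "set w \<subseteq> {..<length x}"
  shows "monomial (affine_line smul x h t) w = (\<Sum>e\<le>length w. smul (t ^ e) (line_coeff x h w e))"
  using assms
proof (induction w)
  case (Cons i w)
  define c where "c e = line_coeff x h w e" for e
  define n where "n = length w"
  have i: "i < length x" using Cons.prems by auto
  have "monomial (affine_line smul x h t) (i # w) = (x ! i + smul t (h ! i)) * (\<Sum>e\<le>n. smul (t ^ e) (c e))"
    using Cons i unfolding c_def n_def by simp
  also have "\<dots> = (\<Sum>e\<le>n. smul (t ^ e) (x ! i * c e)) + (\<Sum>e\<le>n. smul (t ^ Suc e) (h ! i * c e))"
    by (simp add: distrib_right sum_distrib_left mult_scale_right scale_mult_left[symmetric]
        scale_right_distrib sum.distrib scale_scale mult.commute)
  also have "(\<Sum>e\<le>n. smul (t ^ e) (x ! i * c e)) = (\<Sum>e\<le>Suc n. smul (t ^ e) (x ! i * c e))"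
    unfolding c_def n_def by (simp add: line_coeff_eq_0)
  also have "(\<Sum>e\<le>n. smul (t ^ Suc e) (h ! i * c e)) =
      (\<Sum>e\<le>Suc n. smul (t ^ e) (case e of 0 \<Rightarrow> 0 | Suc e' \<Rightarrow> h ! i * c e'))"
    by (subst sum.atMost_Suc_shift) simp
  also have "(\<Sum>e\<le>Suc n. smul (t ^ e) (x ! i * c e)) +
      (\<Sum>e\<le>Suc n. smul (t ^ e) (case e of 0 \<Rightarrow> 0 | Suc e' \<Rightarrow> h ! i * c e')) =
      (\<Sum>e\<le>Suc n. smul (t ^ e) (line_coeff x h (i # w) e))"
    unfolding c_def by (simp add: sum.distrib[symmetric] scale_right_distrib)
  finally show ?case unfolding n_def by simp
qed simp

definition coord_poly :: "'b list \<Rightarrow> 'b list \<Rightarrow> nat list \<Rightarrow> 'b \<Rightarrow> 'a poly" where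
  "coord_poly x h w b = (\<Sum>e\<le>length w. monom (representation B (line_coeff x h w e) b) e)"

lemma degree_coord_poly: "degree (coord_poly x h w b) \<le> length w"
  unfolding coord_poly_def by (rule degree_sum_le) (auto intro: order.trans[OF degree_monom_le])

lemma poly_coord_poly:
  assumes "set w \<subseteq> {..<length x}"
  shows "poly (coord_poly x h w b) t = representation B (monomial (affine_line smul x h t) w) b"
proof -
  have "representation B (monomial (affine_line smul x h t) w) b =
     (\<Sum>e\<le>length w. t ^ e * representation B (line_coeff x h w e) b)"
    unfolding monomial_affine_line[OF assms] using independent_B span_B
    by (simp add: representation_sum representation_scale)
  then show ?thesis unfolding coord_poly_def by (simp add: poly_sum poly_monom mult.commute)
qed

definition basis_list :: "'b list" where
  "basis_list = (SOME l. set l = B \<and> distinct l)"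

lemma basis_list: "set basis_list = B" "length basis_list = card B"
proof -
  have "\<exists>l. set l = B \<and> distinct l" using finite_distinct_list[OF finite_B] by blast
  then have "set basis_list = B \<and> distinct basis_list" unfolding basis_list_def by (rule someI_ex)
  then show "set basis_list = B" "length basis_list = card B" by (metis distinct_card)+
qed

definition coord_mat :: "(nat \<Rightarrow> 'b) \<Rightarrow> 'a mat" where
  "coord_mat u = mat (card B) (card B) (\<lambda>(a, i). representation B (u i) (basis_list ! a))"

lemma coord_mat_carrier: "coord_mat u \<in> carrier_mat (card B) (card B)"
  unfolding coord_mat_def by simp

lemma representation_eq_0_iff: "(\<forall>a<card B. representation B v (basis_list ! a) = 0) \<longleftrightarrow> v = 0"
proof
  assume "\<forall>a<card B. representation B v (basis_list ! a) = 0"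
  then have "\<forall>b\<in>B. representation B v b = 0"
    using basis_list by (metis in_set_conv_nth)
  moreover have "(\<Sum>b\<in>B. smul (representation B v b) b) = v"
    by (rule sum_representation_eq) (use independent_B finite_B span_B in auto)
  ultimately show "v = 0" by simp
qed (simp add: representation_zero)

lemma coord_mat_mult_vec_eq_0:
  assumes "v \<in> carrier_vec (card B)"
  shows "coord_mat u *\<^sub>v v = 0\<^sub>v (card B) \<longleftrightarrow> (\<Sum>i<card B. smul (v $ i) (u i)) = 0"
proof -
  have "(coord_mat u *\<^sub>v v) $ a = representation B (\<Sum>i<card B. smul (v $ i) (u i)) (basis_list ! a)"
    if "a < card B" for a
    using that assms independent_B span_B unfolding coord_mat_def
    by (simp add: scalar_prod_def atLeast0LessThan mult.commute representation_sum representation_scale)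
  then have "coord_mat u *\<^sub>v v = 0\<^sub>v (card B) \<longleftrightarrow>
      (\<forall>a<card B. representation B (\<Sum>i<card B. smul (v $ i) (u i)) (basis_list ! a) = 0)"
    unfolding vec_eq_iff by (simp add: coord_mat_def)
  then show ?thesis by (simp add: representation_eq_0_iff)
qed

lemma det_coord_mat_neq_0_iff:
  "det (coord_mat u) \<noteq> 0 \<longleftrightarrow> (\<forall>c. (\<Sum>i<card B. smul (c i) (u i)) = 0 \<longrightarrow> (\<forall>i<card B. c i = 0))"
proof
  assume det: "det (coord_mat u) \<noteq> 0"
  show "\<forall>c. (\<Sum>i<card B. smul (c i) (u i)) = 0 \<longrightarrow> (\<forall>i<card B. c i = 0)"
  proof (rule allI, rule impI)
    fix c assume c: "(\<Sum>i<card B. smul (c i) (u i)) = 0"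
    have "(\<Sum>i<card B. smul (vec (card B) c $ i) (u i)) = (\<Sum>i<card B. smul (c i) (u i))"
      by (rule sum.cong) auto
    then have "(\<Sum>i<card B. smul (vec (card B) c $ i) (u i)) = 0"
      using c by simp
    then have "coord_mat u *\<^sub>v vec (card B) c = 0\<^sub>v (card B)"
      by (simp add: coord_mat_mult_vec_eq_0)
    then have "vec (card B) c = 0\<^sub>v (card B)"
      using det det_0_iff_vec_prod_zero_field[OF coord_mat_carrier] by (metis vec_carrier)
    then show "\<forall>i<card B. c i = 0" by (metis index_vec index_zero_vec(1))
  qed
next
  assume nontrivial: "\<forall>c. (\<Sum>i<card B. smul (c i) (u i)) = 0 \<longrightarrow> (\<forall>i<card B. c i = 0)"
  show "det (coord_mat u) \<noteq> 0"
  proof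
    assume "det (coord_mat u) = 0"
    then obtain v where v: "v \<in> carrier_vec (card B)" "v \<noteq> 0\<^sub>v (card B)"
      "coord_mat u *\<^sub>v v = 0\<^sub>v (card B)"
      using det_0_iff_vec_prod_zero_field[OF coord_mat_carrier] by blast
    then have "\<forall>i<card B. v $ i = 0"
      using nontrivial coord_mat_mult_vec_eq_0[OF v(1)] by blast
    then show False using v(1,2) by (auto simp: vec_eq_iff)
  qed
qed

lemma span_independent_family:
  assumes "inj_on u {..<card B}" "independent (u ` {..<card B})"
  shows "span (u ` {..<card B}) = UNIV"
proof -
  have "card (u ` {..<card B}) = card B" using card_image[OF assms(1)] by simp
  then show ?thesis
    using card_ge_dim_independent[of "u ` {..<card B}" UNIV] assms(2) by auto
qed

lemma det_along_line_poly:
  assumes "\<And>i. i < card B \<Longrightarrow> set (w i) \<subseteq> {..<length x}"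
    and "\<And>i. i < card B \<Longrightarrow> length (w i) \<le> card B - 1"
  obtains D where "degree D \<le> (card B - 1) * card B"
    and "\<And>t. poly D t = det (coord_mat (\<lambda>i. monomial (affine_line smul x h t) (w i)))"
proof
  define M where "M = mat (card B) (card B) (\<lambda>(a, i). coord_poly x h (w i) (basis_list ! a))"
  show "poly (det M) t = det (coord_mat (\<lambda>i. monomial (affine_line smul x h t) (w i)))" for t
  proof -
    interpret evaluation: comm_ring_hom "\<lambda>p. poly p t" by unfold_locales auto
    have "map_mat (\<lambda>p. poly p t) M = coord_mat (\<lambda>i. monomial (affine_line smul x h t) (w i))"
      by (rule eq_matI) (auto simp: M_def coord_mat_def poly_coord_poly assms(1))
    then show ?thesis using evaluation.hom_det[of M] by simp
  qed
  show "degree (det M) \<le> (card B - 1) * card B"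
  proof (rule degree_det_le)
    fix i j assume "i < card B" "j < card B"
    then have "degree (coord_poly x h (w j) (basis_list ! i)) \<le> card B - 1"
      using degree_coord_poly assms(2) order.trans by blast
    then show "degree (M $$ (i, j)) \<le> card B - 1"
      using \<open>i < card B\<close> \<open>j < card B\<close> by (simp add: M_def)
  qed (simp add: M_def)
qed

lemma generates_if_det_coord_mat_neq_0:
  assumes "det (coord_mat (\<lambda>i. monomial y (w i))) \<noteq> 0"
    and "\<And>i. i < card B \<Longrightarrow> set (w i) \<subseteq> {..<length y}"
  shows "alg_generates smul y"
proof -
  have "inj_on (\<lambda>i. monomial y (w i)) {..<card B} \<and> independent ((\<lambda>i. monomial y (w i)) ` {..<card B})"
    using assms(1) det_coord_mat_neq_0_iff trivial_relation_iff by simp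
  then have "span ((\<lambda>i. monomial y (w i)) ` {..<card B}) = UNIV"
    using span_independent_family by blast
  moreover have "(\<lambda>i. monomial y (w i)) ` {..<card B} \<subseteq> monomials y"
    unfolding monomials_eq using assms(2) by auto
  ultimately have "span (monomials y) = UNIV"
    by (metis span_mono top.extremum_uniqueI)
  then show ?thesis by (simp add: alg_generates_monomials)
qed

text \<open>Along the affine line from a tuple \<open>x\<close> (at \<open>t = 0\<close>) to a generating tuple \<open>g\<close>
  (at \<open>t = 1\<close>), at most \<open>(m - 1) m\<close> points fail to generate: for a basis of short monomials
  in \<open>g\<close>, the coordinate determinant of the corresponding monomials along the line is a
  polynomial in \<open>t\<close> of degree \<open>\<le> (m - 1) m\<close>, non-zero at \<open>t = 1\<close>.\<close>
lemma few_nongenerating_points_on_line: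
  assumes g: "length g = r" "alg_generates smul g" and x: "length x = r"
  shows "card {t. \<not> alg_generates smul (affine_line smul x (map (\<lambda>i. g ! i - x ! i) [0..<r]) t)}
           \<le> (card B - 1) * card B"
proof -
  define h where "h = map (\<lambda>i. g ! i - x ! i) [0..<r]"
  obtain w where w: "\<forall>i<card B. w i \<in> words r (card B - 1)"
    "inj_on (\<lambda>i. monomial g (w i)) {..<card B}" "independent ((\<lambda>i. monomial g (w i)) ` {..<card B})"
    using short_monomial_basis[OF g] by blast
  have w_set: "set (w i) \<subseteq> {..<length x}" "length (w i) \<le> card B - 1" if "i < card B" for i
    using w(1) that x unfolding words_def by auto
  obtain D where D: "degree D \<le> (card B - 1) * card B"
    "\<And>t. poly D t = det (coord_mat (\<lambda>i. monomial (affine_line smul x h t) (w i)))"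
    using det_along_line_poly[of w x h] w_set by blast
  have "affine_line smul x h 1 = g"
    by (rule nth_equalityI) (auto simp: h_def x g)
  then have "poly D 1 \<noteq> 0"
    using D(2) w(2,3) det_coord_mat_neq_0_iff trivial_relation_iff by simp
  then have "D \<noteq> 0" by auto
  have "alg_generates smul (affine_line smul x h t)" if "poly D t \<noteq> 0" for t
    using generates_if_det_coord_mat_neq_0[of "affine_line smul x h t" w] that D(2) w_set(1) by simp
  then have "{t. \<not> alg_generates smul (affine_line smul x h t)} \<subseteq> {t. poly D t = 0}" by blast
  then have "card {t. \<not> alg_generates smul (affine_line smul x h t)} \<le> card {t. poly D t = 0}"
    by (intro card_mono) simp_all
  also have "\<dots> \<le> degree D"
    by (rule card_poly_roots_bound[OF \<open>D \<noteq> 0\<close>])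
  finally show ?thesis using D(1) unfolding h_def by linarith
qed

text \<open>For a fixed \<open>t \<noteq> 1\<close>, \<open>x \<mapsto> (1 - t) x + t g\<close> permutes the \<open>r\<close>-tuples, so exactly
  \<open>ng r\<close> tuples \<open>x\<close> have a non-generating point at parameter \<open>t\<close>.\<close>
lemma card_nongenerating_at_parameter:
  assumes g: "length g = r" and t: "t \<noteq> 1"
  shows "card {x. length x = r \<and> \<not> alg_generates smul (affine_line smul x (map (\<lambda>i. g ! i - x ! i) [0..<r]) t)}
          = ng smul r"
proof -
  define \<Phi> where "\<Phi> x = affine_line smul x (map (\<lambda>i. g ! i - x ! i) [0..<r]) t" for x
  define \<Psi> where "\<Psi> z = map (\<lambda>i. smul (inverse (1 - t)) (z ! i - smul t (g ! i))) [0..<r]" for z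
  have t1: "1 - t \<noteq> 0" using t by simp
  have \<Phi>_nth: "\<Phi> x ! i = smul (1 - t) (x ! i) + smul t (g ! i)" if "length x = r" "i < r" for x i
    using that unfolding \<Phi>_def by (simp add: scale_right_diff_distrib scale_left_diff_distrib)
  have length_\<Phi>: "length (\<Phi> x) = length x" for x unfolding \<Phi>_def by simp
  have inj: "inj_on \<Phi> {x. length x = r}"
  proof (rule inj_onI)
    fix x y assume xy: "x \<in> {x. length x = r}" "y \<in> {x. length x = r}" "\<Phi> x = \<Phi> y"
    show "x = y"
    proof (rule nth_equalityI)
      show "length x = length y" using xy by simp
      fix i assume "i < length x"
      then have "smul (1 - t) (x ! i) = smul (1 - t) (y ! i)"
        using xy \<Phi>_nth[of x i] \<Phi>_nth[of y i] by auto
      then show "x ! i = y ! i" using t1 by simp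
    qed
  qed
  have \<Phi>_\<Psi>: "\<Phi> (\<Psi> z) = z" if "length z = r" for z
    by (rule nth_equalityI) (use that t1 in \<open>auto simp: length_\<Phi> \<Phi>_nth \<Psi>_def\<close>)
  have "\<Phi> ` {x. length x = r \<and> \<not> alg_generates smul (\<Phi> x)} = NG smul r"
  proof
    show "\<Phi> ` {x. length x = r \<and> \<not> alg_generates smul (\<Phi> x)} \<subseteq> NG smul r"
      unfolding NG_def by (auto simp: length_\<Phi>)
    show "NG smul r \<subseteq> \<Phi> ` {x. length x = r \<and> \<not> alg_generates smul (\<Phi> x)}"
    proof
      fix z assume z: "z \<in> NG smul r"
      then have "length z = r" unfolding NG_def by simp
      then show "z \<in> \<Phi> ` {x. length x = r \<and> \<not> alg_generates smul (\<Phi> x)}"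
        using z \<Phi>_\<Psi> unfolding NG_def by (intro image_eqI[of _ _ "\<Psi> z"]) (auto simp: \<Psi>_def)
    qed
  qed
  moreover have "card (\<Phi> ` {x. length x = r \<and> \<not> alg_generates smul (\<Phi> x)}) =
      card {x. length x = r \<and> \<not> alg_generates smul (\<Phi> x)}"
    by (rule card_image, rule inj_on_subset[OF inj]) auto
  ultimately show ?thesis unfolding ng_eq_card_NG \<Phi>_def by simp
qed

text \<open>Double counting the pairs \<open>(x, t)\<close>, \<open>t \<noteq> 1\<close>, with a non-generating point at parameter
  \<open>t\<close> on the line from \<open>x\<close> to a generating tuple \<open>g\<close>.\<close>
lemma ng_generator_bound:
  assumes g: "length g = r" "alg_generates smul g"
  shows "ng smul r * (card (UNIV::'a set) - 1) \<le> card (UNIV::'b set) ^ r * ((card B - 1) * card B)"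
proof -
  define X where "X = {xs::'b list. length xs = r}"
  define T where "T = (UNIV::'a set) - {1}"
  define P where "P x t = (\<not> alg_generates smul (affine_line smul x (map (\<lambda>i. g ! i - x ! i) [0..<r]) t))"
    for x t
  have X_eq: "X = {xs. set xs \<subseteq> UNIV \<and> length xs = r}" unfolding X_def by simp
  have finite_X: "finite X" unfolding X_eq by (rule finite_lists_length_eq[OF finite_card_UNIV_algebra(1)])
  have card_X: "card X = card (UNIV::'b set) ^ r"
    unfolding X_eq by (rule card_lists_length_eq[OF finite_card_UNIV_algebra(1)])
  have "(\<Sum>x\<in>X. card {t\<in>T. P x t}) = (\<Sum>t\<in>T. card {x\<in>X. P x t})"
    using finite_X by (simp add: card_filter_sum sum.swap[of _ X T])
  also have "\<dots> = (\<Sum>t\<in>T. ng smul r)"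
    using card_nongenerating_at_parameter[OF g(1)] unfolding X_def P_def T_def by simp
  also have "\<dots> = ng smul r * (card (UNIV::'a set) - 1)"
    unfolding T_def by (simp add: card_Diff_singleton)
  finally have "ng smul r * (card (UNIV::'a set) - 1) = (\<Sum>x\<in>X. card {t\<in>T. P x t})" ..
  also have "\<dots> \<le> (\<Sum>x\<in>X. (card B - 1) * card B)"
  proof (rule sum_mono)
    fix x assume "x \<in> X"
    then have "card {t. P x t} \<le> (card B - 1) * card B"
      unfolding P_def X_def using few_nongenerating_points_on_line[OF g] by simp
    moreover have "card {t\<in>T. P x t} \<le> card {t. P x t}" by (rule card_mono) auto
    ultimately show "card {t\<in>T. P x t} \<le> (card B - 1) * card B" by simp
  qed
  finally show ?thesis using card_X by (simp add: mult.commute)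
qed

end

lemma counting_bound_arith:
  fixes N Q m q :: nat
  assumes "N * (q - 1) \<le> Q * ((m - 1) * m)" "N \<le> Q" "m \<ge> 1"
  shows "N * q \<le> Q * m\<^sup>2"
proof -
  have "N * q \<le> N * (q - 1) + N" by (cases q) auto
  also have "\<dots> \<le> Q * ((m - 1) * m) + Q" using assms(1,2) by simp
  also have "\<dots> = Q * ((m - 1) * m + 1)" by simp
  also have "(m - 1) * m + 1 \<le> m\<^sup>2" using assms(3) by (cases m) (auto simp: power2_eq_square)
  then have "Q * ((m - 1) * m + 1) \<le> Q * m\<^sup>2" by (rule mult_left_mono) simp
  finally show ?thesis .
qed

lemma root_bound_arith:
  fixes N R q :: real and k r m :: nat
  assumes "N \<ge> 0" "R \<ge> 0" "q > 0" "r \<ge> 1" "k > r"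
    and chain: "N ^ r \<le> R ^ k"
    and R_bound: "R * q \<le> real m ^ 2 * q ^ (m * r)"
  shows "N \<le> real m powr (2 * real k / real r) * q powr (real m * real k - real k / real r)"
proof -
  have "N = (N ^ r) powr (1 / real r)"
    using assms(1,4) by (simp add: powr_realpow'[symmetric] powr_powr)
  also have "\<dots> \<le> (R ^ k) powr (1 / real r)"
    using chain assms(1) by (intro powr_mono2) auto
  also have "\<dots> = R powr (real k / real r)"
    using assms(2,5) by (simp add: powr_realpow'[symmetric] powr_powr)
  also have "\<dots> \<le> (real m ^ 2 * q powr (real m * real r - 1)) powr (real k / real r)"
  proof (rule powr_mono2)
    have "q powr (real m * real r - 1) = q ^ (m * r) / q"
      using assms(3) by (simp add: powr_diff powr_realpow[symmetric])
    then show "R \<le> real m ^ 2 * q powr (real m * real r - 1)"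
      using R_bound assms(3) by (simp add: pos_le_divide_eq)
  qed (use assms(2) in auto)
  also have "\<dots> = real m powr (2 * real k / real r) * q powr (real m * real k - real k / real r)"
  proof -
    have "(real m ^ 2) powr (real k / real r) = real m powr (2 * real k / real r)"
      by (simp add: powr_powr flip: powr_numeral)
    moreover have "(real m * real r - 1) * (real k / real r) = real m * real k - real k / real r"
      using assms(4) by (simp add: field_simps)
    ultimately show ?thesis
      using assms(3) by (simp add: powr_mult powr_powr)
  qed
  finally show ?thesis .
qed

theorem mainTheorem6:
  fixes smul :: "'a::{finite,field} \<Rightarrow> 'b::ring_1 \<Rightarrow> 'b"
    and m r k q :: nat
  assumes "q = card (UNIV :: 'a set)"
    and "is_F_algebra smul"
    and "F_dim_eq smul m"
    and "r \<ge> 1"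
    and "\<exists>xs. length xs = r \<and> alg_generates smul xs"
    and "k > r"
  shows "real (ng smul k) \<le>
           real m powr (2 * real k / real r) * real q powr (real m * real k - real k / real r)"
proof -
  obtain B where B: "finite B" "\<not> module.dependent smul B" "module.span smul B = UNIV" "card B = m"
    using assms(3) unfolding F_dim_eq_def by blast
  interpret finite_algebra smul B using assms(2) B by unfold_locales auto
  obtain g where g: "length g = r" "alg_generates smul g" using assms(5) by blast
  have card_algebra: "card (UNIV :: 'b set) = q ^ m"
    using finite_card_UNIV_algebra assms(1) B(4) by simp
  have "ng smul r \<le> (q ^ m) ^ r"
    using ng_le_card_tuples[OF finite_card_UNIV_algebra(1)] card_algebra by simp
  then have "ng smul r * q \<le> (q ^ m) ^ r * m\<^sup>2"
    using counting_bound_arith ng_generator_bound[OF g] card_algebra card_B_pos assms(1) B(4) by simp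
  then have R_bound: "real (ng smul r) * real q \<le> real m ^ 2 * real q ^ (m * r)"
    by (simp add: power_mult mult.commute flip: of_nat_mult of_nat_power of_nat_le_iff)
  have "real (ng smul k) ^ r \<le> real (ng smul r) ^ k"
    using ng_chain[OF assms(2) finite_card_UNIV_algebra(1) assms(4)] assms(6)
    by (simp flip: of_nat_power)
  moreover have "q > 0" using assms(1) by (simp add: card_gt_0_iff)
  ultimately show ?thesis
    using root_bound_arith[OF _ _ _ assms(4,6) _ R_bound] by simp
qed

end
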